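(* Let $X$ be a nonempty countable set, $\mathcal D$ a distribution on $X$, $m\ge1$, $S\sim\mathcal D^m$, and let $g$ be any random variable on the same probability space as $S$ taking values in a finite nonempty set $G$. For $g_0\in G$ with $\Pr[g=g_0]>0$ let $\mathcal D_{\mathrm{goal}}(g_0)=\mathbb E[\mathrm{Unif}(S)\mid g=g_0]$. Then $$\mathbb E_g\big[d_{\mathrm{TV}}(\mathcal D,\mathcal D_{\mathrm{goal}}(g))\big]\le\sqrt{\frac{\ln|G|}{2m}}.$$
   Context: For a tuple $S=(S_1,\dots,S_m)$, $\mathrm{Unif}(S)$ is the law of $S_i$ for $i$ uniform on $[m]$; $\mathbb E[\mathrm{Unif}(S)\mid g=g_0]$ is the corresponding mixture (law of a uniformly random coordinate of $S$ conditioned on $g=g_0$). $d_{\mathrm{TV}}$ is total variation distance. *)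

theory Defs
  imports "HOL-Probability.Probability"
begin

definition dTV :: "'a pmf \<Rightarrow> 'a pmf \<Rightarrow> real" where
  "dTV p q = (SUP A. \<bar>measure_pmf.prob p A - measure_pmf.prob q A\<bar>)"

definition Unif :: "'a list \<Rightarrow> 'a pmf" where
  "Unif S = map_pmf (\<lambda>i. S ! i) (pmf_of_set {..<length S})"

text \<open>J is the joint law of (S, g). D_goal J g0 = E[Unif(S) | g = g0],
  meaningful when Pr[g = g0] > 0.\<close>
definition D_goal :: "('a list \<times> 'g) pmf \<Rightarrow> 'g \<Rightarrow> 'a pmf" where
  "D_goal J g0 = bind_pmf (cond_pmf J {p. snd p = g0}) (\<lambda>p. Unif (fst p))"

end

theory Submission
  imports Defs
begin

text \<open>
  Let \<open>A\<^sub>g = {x. pmf D x < pmf (D_goal J g) x}\<close>. The total variation distance is attained at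
  \<open>A\<^sub>g\<close>, and \<open>D_goal J g\<close> is the conditional mean of the empirical measure \<open>Unif S\<close>; hence
  \<open>dTV D (D_goal J g)\<close> is at most the conditional mean of \<open>Unif S A\<^sub>g - D A\<^sub>g\<close>, and so of the
  maximum of these deviations over all \<open>g \<in> G\<close>. Averaging over \<open>g\<close> removes the conditioning,
  leaving the expected maximum of \<open>|G|\<close> deviations of an empirical frequency from its mean
  under \<open>S \<sim> D\<^sup>m\<close>. Each such deviation is a centred binomial frequency, whose moment generating
  function is bounded by Hoeffding's lemma, and the standard maximal inequality for
  sub-Gaussian variables bounds the expected maximum by \<open>sqrt (ln |G| / (2m))\<close>.
\<close>

lemma integrable_measure_pmf_bounded:
  fixes f :: "'a \<Rightarrow> real"
  assumes "\<And>x. \<bar>f x\<bar> \<le> B"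
  shows "integrable (measure_pmf M) f"
  by (rule measure_pmf.integrable_const_bound[where B = B]) (auto simp: assms)

lemma expectation_bind_pmf_bounded:
  fixes f :: "'b \<Rightarrow> real"
  assumes "\<And>x. \<bar>f x\<bar> \<le> B"
  shows "measure_pmf.expectation (bind_pmf M N) f =
         measure_pmf.expectation M (\<lambda>x. measure_pmf.expectation (N x) f)"
  unfolding measure_pmf_bind
  by (rule integral_bind[where K = "count_space UNIV" and B = B and B' = 1])
     (use assms in \<open>auto simp: measure_pmf.emeasure_space_1 measure_pmf_in_subprob_algebra\<close>)

lemma abs_Max_image_le:
  fixes f :: "'a \<Rightarrow> real"
  assumes "finite G" "G \<noteq> {}" "\<And>g. g \<in> G \<Longrightarrow> \<bar>f g\<bar> \<le> B"
  shows "\<bar>Max (f ` G)\<bar> \<le> B"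
proof -
  have "Max (f ` G) \<in> f ` G" using assms(1,2) by (intro Max_in) auto
  thus ?thesis using assms(3) by auto
qed

lemma abs_prob_diff_le_1: "\<bar>measure_pmf.prob p A - measure_pmf.prob q A\<bar> \<le> 1"
  using measure_pmf.prob_le_1[of p A] measure_pmf.prob_le_1[of q A]
    measure_nonneg[of "measure_pmf p" A] measure_nonneg[of "measure_pmf q" A] by linarith

lemma measure_pmf_prob_mono_pmf:
  assumes "\<And>x. x \<in> B \<Longrightarrow> pmf p x \<le> pmf q x"
  shows "measure_pmf.prob p B \<le> measure_pmf.prob q B"
proof -
  have "emeasure (measure_pmf p) B = \<integral>\<^sup>+ x. ennreal (pmf p x) * indicator B x \<partial>count_space UNIV"
    by (simp add: nn_integral_measure_pmf[symmetric])
  also have "\<dots> \<le> \<integral>\<^sup>+ x. ennreal (pmf q x) * indicator B x \<partial>count_space UNIV"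
    using assms by (intro nn_integral_mono) (auto simp: indicator_def)
  also have "\<dots> = emeasure (measure_pmf q) B"
    by (simp add: nn_integral_measure_pmf[symmetric])
  finally show ?thesis by (simp add: measure_pmf.emeasure_eq_measure)
qed

subsection \<open>Total variation distance\<close>

lemma dTV_le_prob_diff:
  fixes p q :: "'a pmf"
  defines "B \<equiv> {x. pmf p x < pmf q x}"
  shows "dTV p q \<le> measure_pmf.prob q B - measure_pmf.prob p B"
proof -
  have one_sided: "measure_pmf.prob q A - measure_pmf.prob p A
                   \<le> measure_pmf.prob q B - measure_pmf.prob p B" for A
  proof -
    have split: "measure_pmf.prob r A = measure_pmf.prob r (A \<inter> B) + measure_pmf.prob r (A - B)"
      "measure_pmf.prob r B = measure_pmf.prob r (A \<inter> B) + measure_pmf.prob r (B - A)" for r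
      by (metis Int_Diff_Un Int_Diff_disjoint Int_commute measure_pmf.finite_measure_Union
          sets_measure_pmf UNIV_I)+
    have "measure_pmf.prob q (A - B) \<le> measure_pmf.prob p (A - B)"
      by (rule measure_pmf_prob_mono_pmf) (auto simp: B_def)
    moreover have "measure_pmf.prob p (B - A) \<le> measure_pmf.prob q (B - A)"
      by (rule measure_pmf_prob_mono_pmf) (auto simp: B_def)
    ultimately show ?thesis using split[of p] split[of q] by linarith
  qed
  have "\<bar>measure_pmf.prob p A - measure_pmf.prob q A\<bar>
        \<le> measure_pmf.prob q B - measure_pmf.prob p B" for A
  proof -
    have "measure_pmf.prob p A - measure_pmf.prob q A = measure_pmf.prob q (-A) - measure_pmf.prob p (-A)"
      using measure_pmf.prob_compl[of A q] measure_pmf.prob_compl[of A p]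
      by (simp add: Compl_eq_Diff_UNIV)
    thus ?thesis using one_sided[of A] one_sided[of "-A"] by linarith
  qed
  thus ?thesis unfolding dTV_def by (intro cSUP_least) auto
qed

lemma dTV_bind_pmf_le_expectation:
  fixes D :: "'a pmf" and Q :: "'b pmf" and N :: "'b \<Rightarrow> 'a pmf"
  defines "B \<equiv> {x. pmf D x < pmf (bind_pmf Q N) x}"
  shows "dTV D (bind_pmf Q N)
         \<le> measure_pmf.expectation Q (\<lambda>q. measure_pmf.prob (N q) B - measure_pmf.prob D B)"
proof -
  have "measure_pmf.prob (bind_pmf Q N) B
        = measure_pmf.expectation Q (\<lambda>q. measure_pmf.prob (N q) B)"
    using expectation_bind_pmf_bounded[of "indicator B" 1 Q N]
    by (simp add: indicator_def)
  moreover have "measure_pmf.expectation Q (\<lambda>q. measure_pmf.prob (N q) B - measure_pmf.prob D B)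
        = measure_pmf.expectation Q (\<lambda>q. measure_pmf.prob (N q) B) - measure_pmf.prob D B"
    by (subst Bochner_Integration.integral_diff)
       (auto intro!: integrable_measure_pmf_bounded[where B = 1] simp: measure_pmf.prob_space)
  ultimately show ?thesis using dTV_le_prob_diff[of D "bind_pmf Q N"] by (simp add: B_def)
qed

lemma bind_cond_pmf_snd: "bind_pmf (map_pmf snd J) (\<lambda>g. cond_pmf J {p. snd p = g}) = J"
  by (rule bind_cond_pmf_cancel) (auto simp: vimage_def eq_commute)

lemma expectation_cond_pmf_snd:
  fixes f :: "'a \<times> 'b \<Rightarrow> real"
  assumes "\<And>p. \<bar>f p\<bar> \<le> B"
  shows "measure_pmf.expectation (map_pmf snd J)
           (\<lambda>g. measure_pmf.expectation (cond_pmf J {p. snd p = g}) f)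
         = measure_pmf.expectation J f"
  by (subst expectation_bind_pmf_bounded[OF assms, symmetric]) (simp only: bind_cond_pmf_snd)

subsection \<open>Concentration of an empirical frequency\<close>

lemma map_pmf_map_replicate_pmf:
  "map_pmf (map f) (replicate_pmf n p) = replicate_pmf n (map_pmf f p)"
proof (induction n)
  case (Suc n)
  have "replicate_pmf (Suc n) (map_pmf f p)
        = map_pmf f p \<bind> (\<lambda>x. map_pmf (map f) (replicate_pmf n p) \<bind> (\<lambda>xs. return_pmf (x # xs)))"
    by (simp only: replicate_pmf.simps Suc.IH)
  also have "\<dots> = map_pmf (map f) (replicate_pmf (Suc n) p)"
    unfolding bind_map_pmf by (simp add: map_pmf_def bind_assoc_pmf bind_return_pmf)
  finally show ?case by simp
qed simp

lemma map_pmf_indicator_eq_bernoulli_pmf: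
  "map_pmf (\<lambda>x. x \<in> A) D = bernoulli_pmf (measure_pmf.prob D A)"
proof (rule pmf_eqI)
  fix b :: bool
  have "(\<lambda>x. x \<in> A) -` {True} = A" "(\<lambda>x. x \<in> A) -` {False} = -A" by auto
  thus "pmf (map_pmf (\<lambda>x. x \<in> A) D) b = pmf (bernoulli_pmf (measure_pmf.prob D A)) b"
    using measure_pmf.prob_compl[of A D] by (cases b) (simp_all add: pmf_map Compl_eq_Diff_UNIV)
qed

lemma map_pmf_count_replicate_pmf:
  "map_pmf (\<lambda>S. length (filter (\<lambda>x. x \<in> A) S)) (replicate_pmf n D)
     = binomial_pmf n (measure_pmf.prob D A)"
proof -
  have "binomial_pmf n (measure_pmf.prob D A)
      = map_pmf (length \<circ> filter id) (replicate_pmf n (map_pmf (\<lambda>x. x \<in> A) D))"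
    by (subst binomial_pmf_altdef) (auto simp: map_pmf_indicator_eq_bernoulli_pmf)
  also have "\<dots> = map_pmf (\<lambda>S. length (filter (\<lambda>x. x \<in> A) S)) (replicate_pmf n D)"
    by (simp add: map_pmf_map_replicate_pmf[symmetric] pmf.map_comp o_def filter_map)
  finally show ?thesis by simp
qed

lemma expectation_exp_binomial_pmf:
  assumes "p \<in> {0..1}"
  shows "measure_pmf.expectation (binomial_pmf n p) (\<lambda>k. exp (t * real k)) = (1 - p + p * exp t) ^ n"
proof -
  have "measure_pmf.expectation (binomial_pmf n p) (\<lambda>k. exp (t * real k))
      = (\<Sum>k\<le>n. pmf (binomial_pmf n p) k *\<^sub>R exp (t * real k))"
    using assms by (intro integral_measure_pmf) (auto simp: set_pmf_binomial_eq split: if_splits)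
  also have "\<dots> = (\<Sum>k\<le>n. real (n choose k) * (p * exp t) ^ k * (1 - p) ^ (n - k))"
    using assms by (intro sum.cong refl)
      (simp add: pmf_binomial power_mult_distrib mult_ac exp_of_nat_mult[symmetric])
  also have "\<dots> = (p * exp t + (1 - p)) ^ n"
    by (subst binomial_ring) (simp add: mult_ac)
  finally show ?thesis by (simp add: add_ac)
qed

lemma bernoulli_mgf_centered_le:
  fixes p t :: real
  assumes "p \<in> {0..1}" "t \<ge> 0"
  shows "(1 - p + p * exp t) * exp (- t * p) \<le> exp (t\<^sup>2 / 8)"
proof -
  have pos: "1 + p * (exp t - 1) > 0"
    using assms by (intro add_pos_nonneg mult_nonneg_nonneg) auto
  have "exp (- t * p + ln (1 + p * (exp t - 1))) \<le> exp (t\<^sup>2 / 8)"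
    using Hoeffdings_lemma_aux[of t p] assms by simp
  moreover have "exp (- t * p + ln (1 + p * (exp t - 1))) = (1 - p + p * exp t) * exp (- t * p)"
    by (simp only: exp_add exp_ln[OF pos]) (simp add: algebra_simps)
  ultimately show ?thesis by linarith
qed

lemma binomial_frequency_mgf_le:
  assumes p: "p \<in> {0..1}" and m: "m \<ge> 1" and l: "l \<ge> 0"
  shows "measure_pmf.expectation (binomial_pmf m p) (\<lambda>k. exp (l * (real k / real m - p)))
         \<le> exp (l\<^sup>2 / (8 * real m))"
proof -
  define t where "t = l / real m"
  have t: "t \<ge> 0" using l by (simp add: t_def)
  have "exp (l * (real k / real m - p)) = exp (- t * p) ^ m * exp (t * real k)" for k
    using m by (simp add: t_def exp_of_nat_mult[symmetric] exp_add[symmetric] algebra_simps)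
  hence "measure_pmf.expectation (binomial_pmf m p) (\<lambda>k. exp (l * (real k / real m - p)))
         = ((1 - p + p * exp t) * exp (- t * p)) ^ m"
    by (simp add: expectation_exp_binomial_pmf[OF p] power_mult_distrib)
  also have "\<dots> \<le> exp (t\<^sup>2 / 8) ^ m"
    using p by (intro power_mono bernoulli_mgf_centered_le t) auto
  also have "\<dots> = exp (l\<^sup>2 / (8 * real m))"
    using m by (simp add: exp_of_nat_mult[symmetric] t_def power2_eq_square)
  finally show ?thesis .
qed

lemma measure_Unif:
  assumes "S \<noteq> []"
  shows "measure_pmf.prob (Unif S) A = real (length (filter (\<lambda>x. x \<in> A) S)) / real (length S)"
proof -
  have "{..<length S} \<inter> (\<lambda>i. S ! i) -` A = {i. i < length S \<and> S ! i \<in> A}" by auto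
  thus ?thesis unfolding Unif_def using assms
    by (simp add: measure_pmf_of_set length_filter_conv_card lessThan_empty_iff)
qed

lemma empirical_deviation_mgf_le:
  assumes m: "m \<ge> 1" and l: "l \<ge> 0"
  shows "measure_pmf.expectation (replicate_pmf m D)
           (\<lambda>S. exp (l * (measure_pmf.prob (Unif S) A - measure_pmf.prob D A)))
         \<le> exp (l\<^sup>2 / (8 * real m))"
proof -
  let ?p = "measure_pmf.prob D A" and ?count = "\<lambda>S. length (filter (\<lambda>x. x \<in> A) S)"
  have "measure_pmf.expectation (replicate_pmf m D) (\<lambda>S. exp (l * (measure_pmf.prob (Unif S) A - ?p)))
      = measure_pmf.expectation (replicate_pmf m D) (\<lambda>S. exp (l * (real (?count S) / real m - ?p)))"
    using m by (intro integral_cong_AE)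
      (auto simp: AE_measure_pmf_iff set_replicate_pmf measure_Unif simp flip: length_greater_0_conv)
  also have "\<dots> = measure_pmf.expectation (binomial_pmf m ?p) (\<lambda>k. exp (l * (real k / real m - ?p)))"
    by (simp flip: map_pmf_count_replicate_pmf)
  also have "\<dots> \<le> exp (l\<^sup>2 / (8 * real m))"
    by (rule binomial_frequency_mgf_le[OF _ m l]) auto
  finally show ?thesis .
qed

subsection \<open>Maximal inequality for sub-Gaussian families\<close>

lemma exp_expectation_le_expectation_exp:
  fixes f :: "'a \<Rightarrow> real"
  assumes "\<And>x. \<bar>f x\<bar> \<le> B"
  shows "exp (measure_pmf.expectation M f) \<le> measure_pmf.expectation M (\<lambda>x. exp (f x))"
proof (rule measure_pmf.jensens_inequality[where I = UNIV])
  show "integrable (measure_pmf M) f"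
    by (rule integrable_measure_pmf_bounded) (fact assms)
  show "integrable (measure_pmf M) (\<lambda>x. exp (f x))"
    using abs_le_D1[OF assms] by (intro integrable_measure_pmf_bounded[where B = "exp B"]) auto
qed (auto simp: exp_convex)

lemma le_sqrt_of_linear_quadratic_bound:
  fixes E a c :: real
  assumes "c > 0" and "a \<ge> 0" and bound: "\<And>l. l > 0 \<Longrightarrow> l * E \<le> a + c * l\<^sup>2"
  shows "E \<le> sqrt (4 * c * a)"
proof (cases "E > 0")
  case True
  \<comment> \<open>optimise the bound at \<open>l = E / (2 c)\<close>\<close>
  have "E / (2 * c) * E \<le> a + c * (E / (2 * c))\<^sup>2"
    using bound[of "E / (2 * c)"] True \<open>c > 0\<close> by simp
  hence "E\<^sup>2 \<le> 4 * c * a"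
    using \<open>c > 0\<close> by (simp add: power2_eq_square field_simps)
  thus ?thesis by (rule real_le_rsqrt)
next
  case False
  moreover have "sqrt (4 * c * a) \<ge> 0" using assms by simp
  ultimately show ?thesis by linarith
qed

lemma exp_mult_Max_le_sum_exp:
  fixes f :: "'a \<Rightarrow> real"
  assumes "finite G" "G \<noteq> {}"
  shows "exp (l * Max (f ` G)) \<le> (\<Sum>g\<in>G. exp (l * f g))"
proof -
  have "Max (f ` G) \<in> f ` G" using assms by (intro Max_in) auto
  then obtain g where "g \<in> G" "Max (f ` G) = f g" by auto
  thus ?thesis using assms(1) by (auto intro!: member_le_sum[where f = "\<lambda>g. exp (l * f g)"])
qed

lemma expectation_Max_le_sqrt:
  fixes Z :: "'g \<Rightarrow> 'a \<Rightarrow> real"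
  assumes "finite G" "G \<noteq> {}" "c > 0"
    and bounded: "\<And>g x. \<bar>Z g x\<bar> \<le> B"
    and mgf: "\<And>g l. g \<in> G \<Longrightarrow> l > 0 \<Longrightarrow>
                measure_pmf.expectation M (\<lambda>x. exp (l * Z g x)) \<le> exp (c * l\<^sup>2)"
  shows "measure_pmf.expectation M (\<lambda>x. Max ((\<lambda>g. Z g x) ` G)) \<le> sqrt (4 * c * ln (card G))"
proof (rule le_sqrt_of_linear_quadratic_bound[OF \<open>c > 0\<close>])
  define W where "W x = Max ((\<lambda>g. Z g x) ` G)" for x
  have W_bounded: "\<bar>W x\<bar> \<le> B" for x
    unfolding W_def using assms(1,2) by (intro abs_Max_image_le bounded)
  show "ln (card G) \<ge> 0"
    using assms(1,2) by (simp add: Suc_le_eq card_gt_0_iff)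
  fix l :: real assume "l > 0"
  have int_exp: "integrable (measure_pmf M) (\<lambda>x. exp (l * f x))" if "\<And>x. \<bar>f x\<bar> \<le> B" for f
    using that \<open>l > 0\<close>
    by (intro integrable_measure_pmf_bounded[where B = "exp (l * B)"])
       (auto simp: abs_le_iff intro: mult_left_mono)
  have "exp (l * measure_pmf.expectation M W) \<le> measure_pmf.expectation M (\<lambda>x. exp (l * W x))"
    using exp_expectation_le_expectation_exp[of "\<lambda>x. l * W x" "l * B" M] W_bounded \<open>l > 0\<close>
    by (simp add: abs_mult)
  also have "\<dots> \<le> measure_pmf.expectation M (\<lambda>x. \<Sum>g\<in>G. exp (l * Z g x))"
    unfolding W_def
    by (intro integral_mono Bochner_Integration.integrable_sum int_exp bounded
        exp_mult_Max_le_sum_exp assms(1,2) W_bounded[unfolded W_def])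
  also have "\<dots> = (\<Sum>g\<in>G. measure_pmf.expectation M (\<lambda>x. exp (l * Z g x)))"
    by (intro Bochner_Integration.integral_sum int_exp bounded)
  also have "\<dots> \<le> card G * exp (c * l\<^sup>2)"
    using sum_mono[of G _ "\<lambda>_. exp (c * l\<^sup>2)"] mgf \<open>l > 0\<close> by simp
  finally have "l * measure_pmf.expectation M W \<le> ln (card G * exp (c * l\<^sup>2))"
    using assms(1,2) by (subst ln_exp[symmetric], subst ln_le_cancel_iff) (auto simp: card_gt_0_iff)
  thus "l * measure_pmf.expectation M W \<le> ln (card G) + c * l\<^sup>2"
    using assms(1,2) by (simp add: ln_mult card_gt_0_iff)
qed

lemma expectation_Max_empirical_deviation_le:
  fixes D :: "'x pmf" and A :: "'g \<Rightarrow> 'x set"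
  assumes "m \<ge> 1" "finite G" "G \<noteq> {}"
  shows "measure_pmf.expectation (replicate_pmf m D)
           (\<lambda>S. Max ((\<lambda>g. measure_pmf.prob (Unif S) (A g) - measure_pmf.prob D (A g)) ` G))
         \<le> sqrt (ln (card G) / (2 * real m))"
proof -
  have "4 * (1 / (8 * real m)) * ln (card G) = ln (card G) / (2 * real m)" by simp
  moreover have "measure_pmf.expectation (replicate_pmf m D)
           (\<lambda>S. Max ((\<lambda>g. measure_pmf.prob (Unif S) (A g) - measure_pmf.prob D (A g)) ` G))
         \<le> sqrt (4 * (1 / (8 * real m)) * ln (card G))"
  proof (rule expectation_Max_le_sqrt[where B = 1, OF assms(2,3) _ abs_prob_diff_le_1])
    fix g and l :: real assume "l > 0"
    thus "measure_pmf.expectation (replicate_pmf m D)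
            (\<lambda>S. exp (l * (measure_pmf.prob (Unif S) (A g) - measure_pmf.prob D (A g))))
          \<le> exp (1 / (8 * real m) * l\<^sup>2)"
      using empirical_deviation_mgf_le[OF assms(1), of l D "A g"] by simp
  qed (use assms(1) in simp)
  ultimately show ?thesis by simp
qed

theorem mainTheorem7:
  fixes D :: "'x::countable pmf" and J :: "('x list \<times> 'g) pmf"
    and m :: nat and G :: "'g set"
  assumes "m \<ge> 1"
    and "finite G" and "G \<noteq> {}"
    and "map_pmf fst J = replicate_pmf m D"
    and "set_pmf (map_pmf snd J) \<subseteq> G"
  shows "measure_pmf.expectation (map_pmf snd J) (\<lambda>g0. dTV D (D_goal J g0))
           \<le> sqrt (ln (real (card G)) / (2 * real m))"
proof -
  define C where "C g = cond_pmf J {p. snd p = g}" for g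
  define A where "A g = {x. pmf D x < pmf (D_goal J g) x}" for g
  define W where "W S = Max ((\<lambda>g. measure_pmf.prob (Unif S) (A g) - measure_pmf.prob D (A g)) ` G)"
    for S
  have W_bounded: "\<bar>W S\<bar> \<le> 1" for S
    unfolding W_def using assms(2,3) by (intro abs_Max_image_le abs_prob_diff_le_1)
  have "dTV D (D_goal J g) \<le> measure_pmf.expectation (C g) (\<lambda>p. W (fst p))"
    if "g \<in> set_pmf (map_pmf snd J)" for g
  proof -
    have "dTV D (D_goal J g) \<le> measure_pmf.expectation (C g)
            (\<lambda>p. measure_pmf.prob (Unif (fst p)) (A g) - measure_pmf.prob D (A g))"
      unfolding A_def C_def D_goal_def by (rule dTV_bind_pmf_le_expectation)
    also have "\<dots> \<le> measure_pmf.expectation (C g) (\<lambda>p. W (fst p))"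
      using that assms(2,5) W_bounded
      by (intro integral_mono integrable_measure_pmf_bounded[OF abs_prob_diff_le_1]
          integrable_measure_pmf_bounded[OF W_bounded]) (auto simp: W_def)
    finally show ?thesis .
  qed
  hence "measure_pmf.expectation (map_pmf snd J) (\<lambda>g. dTV D (D_goal J g))
         \<le> measure_pmf.expectation (map_pmf snd J) (\<lambda>g. measure_pmf.expectation (C g) (\<lambda>p. W (fst p)))"
    using assms(2,5) finite_subset
    by (intro integral_mono_AE AE_pmfI integrable_measure_pmf_finite) auto
  also have "\<dots> = measure_pmf.expectation J (\<lambda>p. W (fst p))"
    unfolding C_def by (rule expectation_cond_pmf_snd) (rule W_bounded)
  also have "\<dots> = measure_pmf.expectation (replicate_pmf m D) W"
    by (simp flip: assms(4))
  also have "\<dots> \<le> sqrt (ln (real (card G)) / (2 * real m))"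
    unfolding W_def using assms(1-3) by (rule expectation_Max_empirical_deviation_le)
  finally show ?thesis .
qed

end
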